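(* The skew characteristic polynomial is a $4$-invariant of simple graphs: for every simple graph $G$ and every pair of distinct vertices $a,b$ of $G$, $$Q_G(u)-Q_{G'_{ab}}(u)=Q_{\widetilde G_{ab}}(u)-Q_{\widetilde G'_{ab}}(u).$$
   Context: For a simple graph $G$, $A(G)$ denotes its adjacency matrix over $\mathbb{F}_2$ (entry $1$ iff the vertices are adjacent, zero diagonal), and the nondegeneracy $\nu(G)\in\{0,1\}$ equals $1$ iff $\det A(G)=1$ over $\mathbb{F}_2$ (with $\nu$ of the empty graph equal to $1$, the determinant of the empty matrix being $1$). The skew characteristic polynomial is $Q_G(u)=\sum_{U\subset V(G)}\nu(G|_U)\,u^{|V(G)|-|U|}$, where $G|_U$ is the subgraph induced on $U$. For vertices $a,b$: $G'_{ab}$ is obtained from $G$ by switching adjacency between $a$ and $b$; $\widetilde G_{ab}$ is obtained by switching the adjacency between $a$ and each vertex $v\ne a$ adjacent to $b$; $\widetilde G'_{ab}$ is the composition of these two operations. *)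

theory Defs
  imports "HOL-Library.Z2" "HOL-Combinatorics.Permutations"
    "HOL-Computational_Algebra.Polynomial"
begin

text \<open>A simple graph: a finite vertex set V with a symmetric, irreflexive
  adjacency relation E (only its values on V matter).\<close>
definition simple_graph :: "'a set \<Rightarrow> ('a \<Rightarrow> 'a \<Rightarrow> bool) \<Rightarrow> bool" where
  "simple_graph V E \<longleftrightarrow> finite V \<and> (\<forall>x\<in>V. \<forall>y\<in>V. E x y = E y x) \<and> (\<forall>x\<in>V. \<not> E x x)"

text \<open>Determinant over F_2 (type bit) of the adjacency matrix of the induced
  subgraph on U, by the Leibniz formula (signs are irrelevant in characteristic 2).
  For U empty this is 1.\<close>
definition det_F2 :: "('a \<Rightarrow> 'a \<Rightarrow> bool) \<Rightarrow> 'a set \<Rightarrow> bit" where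
  "det_F2 E U = (\<Sum>\<sigma> | \<sigma> permutes U. \<Prod>v\<in>U. (if E v (\<sigma> v) then 1 else 0))"

definition nondeg :: "('a \<Rightarrow> 'a \<Rightarrow> bool) \<Rightarrow> 'a set \<Rightarrow> nat" where
  "nondeg E U = (if det_F2 E U = 1 then 1 else 0)"

definition skew_char_poly :: "'a set \<Rightarrow> ('a \<Rightarrow> 'a \<Rightarrow> bool) \<Rightarrow> int poly" where
  "skew_char_poly V E = (\<Sum>U\<in>Pow V. monom (int (nondeg E U)) (card V - card U))"

definition switch_edge :: "'a \<Rightarrow> 'a \<Rightarrow> ('a \<Rightarrow> 'a \<Rightarrow> bool) \<Rightarrow> ('a \<Rightarrow> 'a \<Rightarrow> bool)" where
  "switch_edge a b E = (\<lambda>x y. if (x = a \<and> y = b) \<or> (x = b \<and> y = a) then \<not> E x y else E x y)"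

definition switch_nbhd :: "'a \<Rightarrow> 'a \<Rightarrow> ('a \<Rightarrow> 'a \<Rightarrow> bool) \<Rightarrow> ('a \<Rightarrow> 'a \<Rightarrow> bool)" where
  "switch_nbhd a b E = (\<lambda>x y. if (x = a \<and> y \<noteq> a \<and> E b y) \<or> (y = a \<and> x \<noteq> a \<and> E b x)
                                then \<not> E x y else E x y)"

end

(* Q_G is a sum over induced subgraphs G|U. If U does not contain both a and b, then
   G|U = G'_ab|U and ~G_ab|U = ~G'_ab|U, so these terms cancel on each side. If U contains
   a and b, the adjacency matrix of ~G_ab|U is P A P^T, where A is that of G|U and P adds
   row b to row a: the new diagonal entry A_aa + A_ab + A_ba + A_bb vanishes because A is
   symmetric with zero diagonal and we work over F_2. Hence det is unchanged, and the same
   holds for G'_ab since switching the edge ab commutes with ~. *)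
theory Submission
  imports Defs
begin

definition permanent :: "('a \<Rightarrow> 'a \<Rightarrow> 'b::comm_semiring_1) \<Rightarrow> 'a set \<Rightarrow> 'b" where
  "permanent M U = (\<Sum>\<sigma> | \<sigma> permutes U. \<Prod>v\<in>U. M v (\<sigma> v))"

lemma det_F2_eq_permanent: "det_F2 E U = permanent (\<lambda>x y. of_bool (E x y)) U"
  unfolding det_F2_def permanent_def of_bool_def ..

lemma permanent_cong:
  assumes "\<And>v w. v \<in> U \<Longrightarrow> w \<in> U \<Longrightarrow> M v w = N v w"
  shows "permanent M U = permanent N U"
  unfolding permanent_def
  using assms permutes_in_image by (intro sum.cong prod.cong) fastforce+

lemma permanent_transpose: "permanent (\<lambda>x y. M y x) U = permanent M U"
proof -
  have "(\<Prod>v\<in>U. M (inv \<sigma> v) v) = (\<Prod>v\<in>U. M v (\<sigma> v))" if \<sigma>: "\<sigma> permutes U" for \<sigma>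
    using prod.permute[OF \<sigma>, of "\<lambda>v. M (inv \<sigma> v) v"] permutes_inverses(2)[OF \<sigma>]
    by (simp add: comp_def)
  then show ?thesis
    unfolding permanent_def by (subst sum_permutations_inverse) (auto intro: sum.cong)
qed

lemma permanent_row_add:
  assumes "finite U" and "a \<in> U"
  shows "permanent (M(a := \<lambda>w. K w + L w)) U = permanent (M(a := K)) U + permanent (M(a := L)) U"
proof -
  have row_a: "(\<Prod>v\<in>U. (M(a := R)) v (\<sigma> v)) = R (\<sigma> a) * (\<Prod>v\<in>U - {a}. M v (\<sigma> v))" for R \<sigma>
    using prod.remove[OF assms, of "\<lambda>v. (M(a := R)) v (\<sigma> v)"] by simp
  show ?thesis
    unfolding permanent_def row_a sum.distrib[symmetric] by (simp add: distrib_right)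
qed

lemma permanent_identical_rows:
  fixes M :: "'a \<Rightarrow> 'a \<Rightarrow> bit"
  assumes "a \<in> U" and "b \<in> U" and "a \<noteq> b" and "M a = M b"
  shows "permanent M U = 0"
  unfolding permanent_def
proof (rule sum_involution_eq_0[where h = "\<lambda>\<sigma>. \<sigma> \<circ> transpose a b"])
  fix \<sigma> assume "\<sigma> \<in> {\<sigma>. \<sigma> permutes U}"
  then have \<sigma>: "\<sigma> permutes U" by simp
  show "\<sigma> \<circ> transpose a b \<in> {\<sigma>. \<sigma> permutes U}"
    using permutes_compose[OF permutes_swap_id[OF assms(1,2)] \<sigma>] by simp
  show "\<sigma> \<circ> transpose a b \<circ> transpose a b = \<sigma>"
    by (simp add: comp_assoc)
  show "\<sigma> \<circ> transpose a b \<noteq> \<sigma>"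
    by (metis assms(3) \<sigma> comp_apply permutes_inj injD transpose_apply_first)
  have "(\<Prod>v\<in>U. M v (\<sigma> v)) = (\<Prod>v\<in>U. M (transpose a b v) (\<sigma> (transpose a b v)))"
    using prod.reindex[of "transpose a b" U "\<lambda>v. M v (\<sigma> v)"] assms(1,2) by simp
  also have "\<dots> = (\<Prod>v\<in>U. M v ((\<sigma> \<circ> transpose a b) v))"
    using assms(4) by (intro prod.cong) (auto simp: transpose_def)
  finally have "(\<Prod>v\<in>U. M v ((\<sigma> \<circ> transpose a b) v)) = (\<Prod>v\<in>U. M v (\<sigma> v))" ..
  then show "(\<Prod>v\<in>U. M v ((\<sigma> \<circ> transpose a b) v)) + (\<Prod>v\<in>U. M v (\<sigma> v)) = 0"
    by simp
qed

lemma permanent_add_row: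
  fixes M :: "'a \<Rightarrow> 'a \<Rightarrow> bit"
  assumes "finite U" and "a \<in> U" and "b \<in> U" and "a \<noteq> b"
  shows "permanent (M(a := \<lambda>w. M a w + M b w)) U = permanent M U"
  using permanent_row_add[OF assms(1,2), of M "M a" "M b"]
    permanent_identical_rows[OF assms(2-4), of "M(a := M b)"] assms(4)
  by simp

lemma simple_graph_subset: "simple_graph V E \<Longrightarrow> U \<subseteq> V \<Longrightarrow> simple_graph U E"
  unfolding simple_graph_def by (auto intro: finite_subset)

lemma simple_graph_switch_edge: "simple_graph V E \<Longrightarrow> a \<noteq> b \<Longrightarrow> simple_graph V (switch_edge a b E)"
  unfolding simple_graph_def switch_edge_def by auto

lemma switch_nbhd_switch_edge_commute:
  "a \<noteq> b \<Longrightarrow> switch_nbhd a b (switch_edge a b E) = switch_edge a b (switch_nbhd a b E)"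
  unfolding switch_edge_def switch_nbhd_def fun_eq_iff by simp

lemma det_F2_cong:
  assumes "\<And>v w. v \<in> U \<Longrightarrow> w \<in> U \<Longrightarrow> E v w = F v w"
  shows "det_F2 E U = det_F2 F U"
  unfolding det_F2_eq_permanent using assms by (intro permanent_cong) simp

lemma det_F2_switch_edge_outside:
  "\<not> (a \<in> U \<and> b \<in> U) \<Longrightarrow> det_F2 (switch_edge a b E) U = det_F2 E U"
  by (rule det_F2_cong) (auto simp: switch_edge_def)

lemma det_F2_switch_nbhd:
  assumes G: "simple_graph U E" and "a \<in> U" and "b \<in> U" and "a \<noteq> b"
  shows "det_F2 (switch_nbhd a b E) U = det_F2 E U"
proof -
  define A :: "'a \<Rightarrow> 'a \<Rightarrow> bit" where "A = (\<lambda>x y. of_bool (E x y))"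
  define add_row :: "('a \<Rightarrow> 'a \<Rightarrow> bit) \<Rightarrow> 'a \<Rightarrow> 'a \<Rightarrow> bit"
    where "add_row M = M(a := \<lambda>w. M a w + M b w)" for M
  have fin: "finite U" using G by (simp add: simple_graph_def)
  have congruence: "of_bool (switch_nbhd a b E v w) = add_row (\<lambda>x y. add_row A y x) w v"
    if "v \<in> U" "w \<in> U" for v w
  proof -
    have "E a b = E b a" "\<not> E a a" "\<not> E b b" "E b v = E v b"
      using G that assms(2-4) unfolding simple_graph_def by blast+
    then show ?thesis
      using assms(4) by (cases "v = a"; cases "w = a") (simp_all add: add_row_def A_def switch_nbhd_def)
  qed
  have "det_F2 (switch_nbhd a b E) U = permanent (\<lambda>v w. add_row (\<lambda>x y. add_row A y x) w v) U"
    unfolding det_F2_eq_permanent using congruence by (rule permanent_cong)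
  also have "\<dots> = permanent (add_row (\<lambda>x y. add_row A y x)) U"
    by (rule permanent_transpose)
  also have "\<dots> = permanent (\<lambda>x y. add_row A y x) U"
    unfolding add_row_def using fin assms(2-4) by (rule permanent_add_row)
  also have "\<dots> = permanent (add_row A) U"
    by (rule permanent_transpose)
  also have "\<dots> = permanent A U"
    unfolding add_row_def using fin assms(2-4) by (rule permanent_add_row)
  finally show ?thesis
    by (simp add: A_def det_F2_eq_permanent)
qed

lemma det_F2_switch_edge_switch_nbhd:
  assumes G: "simple_graph U E" and "a \<in> U" and "b \<in> U" and "a \<noteq> b"
  shows "det_F2 (switch_edge a b (switch_nbhd a b E)) U = det_F2 (switch_edge a b E) U"
  using simple_graph_switch_edge[OF G assms(4)] assms(2-4)
  unfolding switch_nbhd_switch_edge_commute[OF assms(4), symmetric]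
  by (rule det_F2_switch_nbhd)

theorem mainTheorem3:
  fixes V :: "'a set" and E :: "'a \<Rightarrow> 'a \<Rightarrow> bool" and a b :: 'a
  assumes "simple_graph V E" and "a \<in> V" and "b \<in> V" and "a \<noteq> b"
  shows "skew_char_poly V E - skew_char_poly V (switch_edge a b E)
       = skew_char_poly V (switch_nbhd a b E) - skew_char_poly V (switch_edge a b (switch_nbhd a b E))"
proof -
  let ?E' = "switch_edge a b E" and ?F = "switch_nbhd a b E"
    and ?F' = "switch_edge a b (switch_nbhd a b E)"
  have summand_eq: "monom (int (nondeg E U)) k - monom (int (nondeg ?E' U)) k
                  = monom (int (nondeg ?F U)) k - monom (int (nondeg ?F' U)) k"
    if "U \<subseteq> V" for U k
  proof (cases "a \<in> U \<and> b \<in> U")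
    case True
    have "simple_graph U E"
      using simple_graph_subset assms(1) \<open>U \<subseteq> V\<close> by blast
    then have "det_F2 ?F U = det_F2 E U" "det_F2 ?F' U = det_F2 ?E' U"
      using True assms(4) by (simp_all add: det_F2_switch_nbhd det_F2_switch_edge_switch_nbhd)
    then show ?thesis by (simp add: nondeg_def)
  next
    case False
    then have "det_F2 ?E' U = det_F2 E U" "det_F2 ?F' U = det_F2 ?F U"
      by (rule det_F2_switch_edge_outside)+
    then show ?thesis by (simp add: nondeg_def)
  qed
  show ?thesis
    unfolding skew_char_poly_def sum_subtractf[symmetric] using summand_eq by (intro sum.cong) auto
qed

end
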